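(* Let $f:\mathbb{N}\to\mathbb{R}$ be non-decreasing with $f(n)>28$ for all $n$, and $p=f(n)\log n/n$. Let $Y=\sum_{i=1}^{n/7}X_i$, where the $X_i$ are independent and $X_i\sim\mathrm{Geom}(1-(1-p)^i)$. Then for every $\varepsilon>0$, $$\mathbb{P}\Big((1-\varepsilon)\Big(\frac n7+\frac n{f(n)}\Big)<Y<(1+\varepsilon)\Big(\frac n7+\frac n{f(n)}\Big)\Big)\longrightarrow 1\quad\text{as }n\to\infty.$$
   Context: $\mathrm{Geom}(q)$ denotes the geometric distribution on $\{1,2,3,\dots\}$ with success probability $q$, i.e. $\mathbb{P}(X=k)=(1-q)^{k-1}q$ (number of trials up to and including the first success). The upper summation limit $n/7$ is understood as an integer (e.g. $\lfloor n/7\rfloor$). *)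

theory Defs
  imports "HOL-Probability.Probability"
begin

text \<open>Geom(q) on {1,2,3,...}: number of trials up to and including the first success.
  The library's geometric_pmf counts failures (support {0,1,...}), so we shift by one.\<close>
definition geom1_pmf :: "real \<Rightarrow> nat pmf" where
  "geom1_pmf q = map_pmf Suc (geometric_pmf q)"

fun geom_sum_pmf :: "real \<Rightarrow> nat \<Rightarrow> nat pmf" where
  "geom_sum_pmf p 0 = return_pmf 0"
| "geom_sum_pmf p (Suc m) =
     bind_pmf (geom_sum_pmf p m) (\<lambda>s.
     bind_pmf (geom1_pmf (1 - (1 - p) ^ Suc m)) (\<lambda>x. return_pmf (s + x)))"

end

theory Submission
  imports Defs "HOL-Real_Asymp.Real_Asymp"
begin

text \<open>
  With \<open>q\<^sub>i = 1 - (1 - p)\<^sup>i\<close>, the sum \<open>Y\<close> has mean \<open>\<mu> = \<Sum>\<^sub>i 1/q\<^sub>i\<close> and variance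
  \<open>\<sigma>\<^sup>2 = \<Sum>\<^sub>i (1 - q\<^sub>i)/q\<^sub>i\<^sup>2 \<le> \<mu>/p\<close>. Bernoulli's inequality gives
  \<open>(1 - ip)/(ip) \<le> 1/q\<^sub>i - 1 \<le> 1/(ip)\<close>, so \<open>\<mu> - m\<close> is squeezed between harmonic sums over \<open>p\<close>:
  for \<open>p = f ln n / n\<close> and \<open>m = n/7\<close> this gives \<open>\<mu> \<le> n/7 + n/f + o(n)\<close>, and summing only over
  \<open>i \<le> n/(ln n)\<^sup>2\<close> gives \<open>\<mu> \<ge> n/7 + (1 - o(1)) n/f\<close> (needed only when \<open>f\<close> is bounded, since
  otherwise \<open>n/f\<close> is absorbed by \<open>\<epsilon> n\<close>). Hence the window contains \<open>\<mu> \<plusminus> \<epsilon>n/14\<close>, while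
  \<open>\<sigma>\<^sup>2 = O(n\<^sup>2/ln n)\<close>, and Chebyshev's inequality bounds the failure probability by
  \<open>O(1/(\<epsilon>\<^sup>2 ln n))\<close>.
\<close>

section \<open>Moments of the shifted geometric distribution\<close>

lemma summable_geometric_times_Suc_square:
  fixes c :: real
  assumes "0 \<le> c" "c < 1"
  shows "summable (\<lambda>n. c ^ n * real (Suc n) ^ 2)"
proof -
  define d where "d = sqrt c"
  have d: "0 \<le> d" "d < 1" and c_eq: "c = d ^ 2"
    using assms by (auto simp: d_def real_sqrt_lt_1_iff)
  let ?a = "\<lambda>n. d ^ n * real (Suc n)"
  have "summable (\<lambda>n. d ^ n * real n + d ^ n)"
    using geometric_sums_times_n[of d] d by (intro summable_add summable_geometric) (auto simp: sums_iff)
  hence summable_a: "summable ?a"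
    by (simp add: algebra_simps)
  \<comment> \<open>the terms of a convergent series are eventually below 1, hence dominate their squares\<close>
  have "eventually (\<lambda>n. ?a n < 1) sequentially"
    using order_tendstoD(2)[OF summable_LIMSEQ_zero[OF summable_a], of 1] by simp
  then obtain N where N: "\<And>n. n \<ge> N \<Longrightarrow> ?a n < 1"
    by (auto simp: eventually_sequentially)
  show ?thesis
  proof (rule summable_comparison_test'[OF summable_a])
    fix n assume "n \<ge> N"
    have "norm (c ^ n * real (Suc n) ^ 2) = ?a n * ?a n"
      using d by (simp add: c_eq power2_eq_square power_mult_distrib flip: power_mult)
    also have "\<dots> \<le> 1 * ?a n"
      using N[OF \<open>n \<ge> N\<close>] d by (intro mult_right_mono) auto
    finally show "norm (c ^ n * real (Suc n) ^ 2) \<le> ?a n" by simp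
  qed
qed

lemma geometric_moment_sums:
  fixes q :: real
  assumes q: "0 < q" "q \<le> 1"
  shows "(\<lambda>n. (1 - q) ^ n * q * real (Suc n)) sums (1 / q)"
    and "(\<lambda>n. (1 - q) ^ n * q * real (Suc n) ^ 2) sums ((2 - q) / q ^ 2)"
proof -
  define c where "c = 1 - q"
  have c: "0 \<le> c" "c < 1" using q by (auto simp: c_def)
  have s0: "(\<lambda>n. c ^ n) sums (1 / q)"
    using geometric_sums[of c] c by (simp add: c_def)
  have "(\<lambda>n. c ^ n * real n + c ^ n) sums (c / q ^ 2 + 1 / q)"
    using geometric_sums_times_n[of c] c by (intro sums_add s0) (simp add: c_def)
  moreover have "c / q ^ 2 + 1 / q = 1 / q ^ 2"
    using q by (simp add: c_def field_simps power2_eq_square)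
  ultimately have s1: "(\<lambda>n. c ^ n * real (Suc n)) sums (1 / q ^ 2)"
    by (simp add: algebra_simps)
  define T where "T = (\<Sum>n. c ^ n * real (Suc n) ^ 2)"
  have T: "(\<lambda>n. c ^ n * real (Suc n) ^ 2) sums T"
    using summable_geometric_times_Suc_square[OF c] by (simp add: T_def summable_sums)
  \<comment> \<open>shifting the index by one expresses \<open>T\<close> through itself and the first two moments\<close>
  have "(\<lambda>n. c ^ Suc n * real (Suc (Suc n)) ^ 2) sums (T - 1)"
    using T by (subst sums_Suc_iff) simp
  moreover have "(\<lambda>n. c * (c ^ n * real (Suc n) ^ 2 + 2 * (c ^ n * real (Suc n)) + c ^ n))
      sums (c * (T + 2 * (1 / q ^ 2) + 1 / q))"
    by (intro sums_mult sums_add T s0 s1)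
  moreover have "(\<lambda>n. c ^ Suc n * real (Suc (Suc n)) ^ 2)
      = (\<lambda>n. c * (c ^ n * real (Suc n) ^ 2 + 2 * (c ^ n * real (Suc n)) + c ^ n))"
    by (simp add: algebra_simps power2_eq_square)
  ultimately have "T - 1 = c * (T + 2 * (1 / q ^ 2) + 1 / q)"
    using sums_unique2 by metis
  hence qT: "q * T = (2 - q) / q ^ 2"
    using q by (simp add: c_def field_simps power2_eq_square)
  show "(\<lambda>n. (1 - q) ^ n * q * real (Suc n)) sums (1 / q)"
    using sums_mult[OF s1, of q] q by (simp add: c_def power2_eq_square mult_ac)
  show "(\<lambda>n. (1 - q) ^ n * q * real (Suc n) ^ 2) sums ((2 - q) / q ^ 2)"
    using sums_mult[OF T, of q] qT by (simp add: c_def mult_ac)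
qed

lemma nn_integral_geom1_pmf:
  fixes h :: "nat \<Rightarrow> real"
  assumes q: "0 < q" "q \<le> 1" and h: "\<And>n. 0 \<le> h n"
    and sums: "(\<lambda>n. (1 - q) ^ n * q * h (Suc n)) sums s"
  shows "(\<integral>\<^sup>+x. ennreal (h x) \<partial>geom1_pmf q) = ennreal s"
proof -
  have "(\<integral>\<^sup>+x. ennreal (h x) \<partial>geom1_pmf q) = (\<integral>\<^sup>+n. ennreal (h (Suc n)) \<partial>geometric_pmf q)"
    by (simp only: geom1_pmf_def nn_integral_map_pmf)
  also have "\<dots> = (\<Sum>n. ennreal ((1 - q) ^ n * q * h (Suc n)))"
    using q h by (simp add: nn_integral_measure_pmf nn_integral_count_space_nat ennreal_mult)
  also have "\<dots> = ennreal s"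
    using q h by (intro suminf_ennreal_eq[OF _ sums]) simp
  finally show ?thesis .
qed

lemma geom1_pmf_moments:
  assumes "0 < q" "q \<le> 1"
  shows "(\<integral>\<^sup>+x. ennreal (real x) \<partial>geom1_pmf q) = ennreal (1 / q)"
    and "(\<integral>\<^sup>+x. ennreal (real x ^ 2) \<partial>geom1_pmf q) = ennreal ((2 - q) / q ^ 2)"
  using nn_integral_geom1_pmf[OF assms _ geometric_moment_sums(1)[OF assms]]
    nn_integral_geom1_pmf[OF assms _ geometric_moment_sums(2)[OF assms]] by auto

lemma nn_integral_bind_add_pmf:
  fixes M N :: "nat pmf"
  defines "K \<equiv> bind_pmf M (\<lambda>s. bind_pmf N (\<lambda>x. return_pmf (s + x)))"
  shows "(\<integral>\<^sup>+y. ennreal (real y) \<partial>K) = (\<integral>\<^sup>+y. ennreal (real y) \<partial>M) + (\<integral>\<^sup>+y. ennreal (real y) \<partial>N)"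
    and "(\<integral>\<^sup>+y. ennreal (real y ^ 2) \<partial>K) = (\<integral>\<^sup>+y. ennreal (real y ^ 2) \<partial>M)
           + 2 * (\<integral>\<^sup>+y. ennreal (real y) \<partial>M) * (\<integral>\<^sup>+y. ennreal (real y) \<partial>N)
           + (\<integral>\<^sup>+y. ennreal (real y ^ 2) \<partial>N)"
proof -
  have linear: "ennreal (real (s + x)) = ennreal (real s) + ennreal (real x)" for s x
    by (simp add: ennreal_plus)
  have square: "ennreal (real (s + x) ^ 2)
      = ennreal (real s ^ 2) + 2 * ennreal (real s) * ennreal (real x) + ennreal (real x ^ 2)" for s x
    by (simp add: power2_eq_square algebra_simps ennreal_plus ennreal_mult)
  show "(\<integral>\<^sup>+y. ennreal (real y) \<partial>K) = (\<integral>\<^sup>+y. ennreal (real y) \<partial>M) + (\<integral>\<^sup>+y. ennreal (real y) \<partial>N)"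
    by (simp add: K_def linear nn_integral_add measure_pmf.emeasure_space_1 del: of_nat_add)
  show "(\<integral>\<^sup>+y. ennreal (real y ^ 2) \<partial>K) = (\<integral>\<^sup>+y. ennreal (real y ^ 2) \<partial>M)
           + 2 * (\<integral>\<^sup>+y. ennreal (real y) \<partial>M) * (\<integral>\<^sup>+y. ennreal (real y) \<partial>N)
           + (\<integral>\<^sup>+y. ennreal (real y ^ 2) \<partial>N)"
    by (simp add: K_def square nn_integral_add nn_integral_cmult nn_integral_multc
        measure_pmf.emeasure_space_1 del: of_nat_add)
qed

section \<open>Mean and variance of the sum\<close>

definition geom_success :: "real \<Rightarrow> nat \<Rightarrow> real" where
  "geom_success p i = 1 - (1 - p) ^ i"

definition geom_sum_mean :: "real \<Rightarrow> nat \<Rightarrow> real" where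
  "geom_sum_mean p m = (\<Sum>i=1..m. 1 / geom_success p i)"

definition geom_sum_var :: "real \<Rightarrow> nat \<Rightarrow> real" where
  "geom_sum_var p m = (\<Sum>i=1..m. (1 - geom_success p i) / geom_success p i ^ 2)"

lemma geom_success_bounds:
  assumes "0 < p" "p \<le> 1" "i \<ge> 1"
  shows "p \<le> geom_success p i" "geom_success p i \<le> 1"
proof -
  have "(1 - p) ^ i \<le> (1 - p) ^ 1"
    using assms by (intro power_decreasing) auto
  thus "p \<le> geom_success p i" by (simp add: geom_success_def)
  show "geom_success p i \<le> 1"
    using assms by (simp add: geom_success_def)
qed

lemma geom_success_pos: "0 < p \<Longrightarrow> p \<le> 1 \<Longrightarrow> i \<ge> 1 \<Longrightarrow> 0 < geom_success p i"
  using geom_success_bounds(1) by fastforce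

lemma geom_sum_mean_nonneg: "0 < p \<Longrightarrow> p \<le> 1 \<Longrightarrow> 0 \<le> geom_sum_mean p m"
  unfolding geom_sum_mean_def by (intro sum_nonneg) (use geom_success_pos in fastforce)

lemma geom_sum_var_nonneg: "0 < p \<Longrightarrow> p \<le> 1 \<Longrightarrow> 0 \<le> geom_sum_var p m"
  unfolding geom_sum_var_def by (intro sum_nonneg) (use geom_success_bounds in fastforce)

lemma geom_sum_pmf_moments:
  assumes p: "0 < p" "p \<le> 1"
  shows "(\<integral>\<^sup>+y. ennreal (real y) \<partial>geom_sum_pmf p m) = ennreal (geom_sum_mean p m)
       \<and> (\<integral>\<^sup>+y. ennreal (real y ^ 2) \<partial>geom_sum_pmf p m)
           = ennreal (geom_sum_var p m + geom_sum_mean p m ^ 2)"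
proof (induction m)
  case 0
  then show ?case by (simp add: geom_sum_mean_def geom_sum_var_def)
next
  case (Suc m)
  define q where "q = geom_success p (Suc m)"
  define \<mu> where "\<mu> = geom_sum_mean p m"
  define \<sigma>2 where "\<sigma>2 = geom_sum_var p m"
  have q: "0 < q" "q \<le> 1"
    using geom_success_pos[OF p] geom_success_bounds(2)[OF p] by (auto simp: q_def)
  have nonneg: "0 \<le> \<mu>" "0 \<le> \<sigma>2"
    using geom_sum_mean_nonneg[OF p] geom_sum_var_nonneg[OF p] by (auto simp: \<mu>_def \<sigma>2_def)
  have mean: "geom_sum_mean p (Suc m) = \<mu> + 1 / q"
    by (simp add: geom_sum_mean_def q_def \<mu>_def)
  have var: "geom_sum_var p (Suc m) = \<sigma>2 + (1 - q) / q ^ 2"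
    by (simp add: geom_sum_var_def q_def \<sigma>2_def)
  have "\<sigma>2 + \<mu> ^ 2 + 2 * \<mu> * (1 / q) + (2 - q) / q ^ 2 = \<sigma>2 + (1 - q) / q ^ 2 + (\<mu> + 1 / q) ^ 2"
    using q by (simp add: field_simps power2_eq_square)
  moreover have "ennreal (\<sigma>2 + \<mu> ^ 2) + 2 * ennreal \<mu> * ennreal (1 / q) + ennreal ((2 - q) / q ^ 2)
      = ennreal (\<sigma>2 + \<mu> ^ 2 + 2 * \<mu> * (1 / q) + (2 - q) / q ^ 2)"
    using q nonneg ennreal_mult[of "2 * \<mu>" "1 / q"] ennreal_mult[of 2 \<mu>] by (simp add: ennreal_plus)
  ultimately have second: "ennreal (\<sigma>2 + \<mu> ^ 2) + 2 * ennreal \<mu> * ennreal (1 / q) + ennreal ((2 - q) / q ^ 2)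
      = ennreal (\<sigma>2 + (1 - q) / q ^ 2 + (\<mu> + 1 / q) ^ 2)"
    by metis
  have success: "1 - (1 - p) ^ Suc m = q"
    by (simp add: q_def geom_success_def)
  show ?case
    unfolding geom_sum_pmf.simps success nn_integral_bind_add_pmf geom1_pmf_moments[OF q] mean var
      Suc.IH[THEN conjunct1] Suc.IH[THEN conjunct2] \<mu>_def[symmetric] \<sigma>2_def[symmetric]
    using q nonneg second by (simp add: ennreal_plus)
qed

lemma geom_sum_pmf_Chebyshev:
  assumes p: "0 < p" "p \<le> 1" and t: "t > 0"
  shows "measure_pmf.prob (geom_sum_pmf p m) {y. t \<le> \<bar>real y - geom_sum_mean p m\<bar>}
           \<le> geom_sum_var p m / t ^ 2"
proof -
  let ?Y = "geom_sum_pmf p m"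
  note moments = geom_sum_pmf_moments[OF p, of m]
  note nonneg = geom_sum_mean_nonneg[OF p, of m] geom_sum_var_nonneg[OF p, of m]
  have integrable: "integrable ?Y real" "integrable ?Y (\<lambda>y. real y ^ 2)"
    by (rule integrableI_nonneg; use moments in auto)+
  have mean: "measure_pmf.expectation ?Y real = geom_sum_mean p m"
    by (subst integral_eq_nn_integral) (use moments nonneg in auto)
  have "measure_pmf.expectation ?Y (\<lambda>y. real y ^ 2) = geom_sum_var p m + geom_sum_mean p m ^ 2"
    by (subst integral_eq_nn_integral) (use moments nonneg in \<open>auto simp del: ennreal_plus\<close>)
  hence variance: "measure_pmf.variance ?Y real = geom_sum_var p m"
    using measure_pmf.variance_eq[OF integrable] mean by simp
  show ?thesis
    using measure_pmf.Chebyshev_inequality[OF _ integrable(2) t] mean variance by simp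
qed

lemma geom_sum_pmf_prob_interval_ge:
  assumes p: "0 < p" "p \<le> 1" and t: "t > 0"
    and lower: "a \<le> geom_sum_mean p m - t" and upper: "geom_sum_mean p m + t \<le> b"
  shows "1 - geom_sum_var p m / t ^ 2 \<le> measure_pmf.prob (geom_sum_pmf p m) {y. a < real y \<and> real y < b}"
proof -
  let ?Y = "geom_sum_pmf p m"
  define T where "T = {y. t \<le> \<bar>real y - geom_sum_mean p m\<bar>}"
  have "1 - measure_pmf.prob ?Y T = measure_pmf.prob ?Y (UNIV - T)"
    using measure_pmf.prob_compl[of T ?Y] by simp
  also have "\<dots> \<le> measure_pmf.prob ?Y {y. a < real y \<and> real y < b}"
    using lower upper by (intro measure_pmf.finite_measure_mono) (auto simp: T_def)
  finally show ?thesis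
    using geom_sum_pmf_Chebyshev[OF p t, of m] by (simp add: T_def)
qed

lemma inverse_geom_success_le:
  assumes p: "0 < p" "p \<le> 1" and i: "i \<ge> 1"
  shows "1 / geom_success p i \<le> 1 + 1 / (real i * p)"
proof -
  have ip: "real i * p > 0" using p i by auto
  have "(1 - p) ^ i * (1 + real i * p) \<le> (1 - p) ^ i * (1 + p) ^ i"
    using Bernoulli_inequality[of p i] p by (intro mult_left_mono) auto
  also have "\<dots> = (1 - p ^ 2) ^ i"
    by (simp add: power2_eq_square algebra_simps flip: power_mult_distrib)
  also have "\<dots> \<le> 1"
    using p by (intro power_le_one) (auto simp: power2_eq_square mult_le_one)
  finally have "real i * p \<le> geom_success p i * (1 + real i * p)"
    by (simp add: geom_success_def algebra_simps)
  thus ?thesis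
    using geom_success_pos[OF p i] ip p i by (simp add: divide_simps) (simp add: algebra_simps)
qed

lemma geom_success_le: "0 \<le> p \<Longrightarrow> p \<le> 1 \<Longrightarrow> geom_success p i \<le> real i * p"
  using Bernoulli_inequality[of "- p" i] by (simp add: geom_success_def)

lemma geom_sum_mean_le:
  assumes p: "0 < p" "p \<le> 1" and m: "m \<ge> 1"
  shows "geom_sum_mean p m \<le> real m + (ln (real m) + 1) / p"
proof -
  have "geom_sum_mean p m \<le> (\<Sum>i=1..m. 1 + inverse (real i) / p)"
    unfolding geom_sum_mean_def using inverse_geom_success_le[OF p]
    by (intro sum_mono) (auto simp: field_simps)
  also have "\<dots> = real m + harm m / p"
    by (simp add: sum.distrib harm_def sum_divide_distrib)
  also have "harm m \<le> ln (real m) + 1"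
    using euler_mascheroni_sequence_decreasing[of 1 m] m by (simp add: harm_def)
  finally show ?thesis
    using p by (simp add: divide_right_mono)
qed

lemma geom_sum_var_le_mean:
  assumes p: "0 < p" "p \<le> 1"
  shows "geom_sum_var p m \<le> geom_sum_mean p m / p"
  unfolding geom_sum_var_def geom_sum_mean_def sum_divide_distrib
proof (intro sum_mono)
  fix i assume "i \<in> {1..m}"
  hence q: "p \<le> geom_success p i" "geom_success p i \<le> 1" "0 < geom_success p i"
    using geom_success_bounds[OF p] geom_success_pos[OF p] by auto
  have "(1 - geom_success p i) / geom_success p i ^ 2 \<le> (1 / geom_success p i) / geom_success p i"
    using q by (simp add: power2_eq_square divide_right_mono)
  also have "\<dots> \<le> (1 / geom_success p i) / p"
    using q p by (intro divide_left_mono) auto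
  finally show "(1 - geom_success p i) / geom_success p i ^ 2 \<le> 1 / geom_success p i / p" .
qed

lemma geom_sum_mean_ge_harm:
  assumes p: "0 < p" "p \<le> 1" and L: "L \<le> m" "real L * p \<le> 1"
  shows "real m + (1 - real L * p) * harm L / p \<le> geom_sum_mean p m"
proof -
  have excess: "(1 - real L * p) * (inverse (real i) / p) \<le> 1 / geom_success p i - 1"
    if i: "1 \<le> i" "i \<le> L" for i
  proof -
    have q: "0 < geom_success p i" "geom_success p i \<le> real i * p"
      using geom_success_pos[OF p i(1)] geom_success_le[of p i] p by auto
    have ip: "0 < real i * p" "real i * p \<le> real L * p"
      using i p by (auto intro: mult_right_mono)
    have "(1 - real L * p) * (inverse (real i) / p) = (1 - real L * p) / (real i * p)"
      by (simp add: field_simps)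
    also have "\<dots> \<le> (1 - real i * p) / (real i * p)"
      using ip by (intro divide_right_mono) auto
    also have "\<dots> \<le> (1 - real i * p) / geom_success p i"
      using q ip L(2) by (intro divide_left_mono) auto
    also have "\<dots> \<le> (1 - geom_success p i) / geom_success p i"
      using q by (intro divide_right_mono) auto
    also have "\<dots> = 1 / geom_success p i - 1"
      using q by (simp add: field_simps)
    finally show ?thesis .
  qed
  have "(1 - real L * p) * harm L / p = (\<Sum>i=1..L. (1 - real L * p) * (inverse (real i) / p))"
    by (simp add: harm_def sum_distrib_left sum_divide_distrib)
  also have "\<dots> \<le> (\<Sum>i=1..L. 1 / geom_success p i - 1)"
    using excess by (intro sum_mono) auto
  also have "\<dots> \<le> (\<Sum>i=1..m. 1 / geom_success p i - 1)"
    using L geom_success_bounds(2)[OF p] geom_success_pos[OF p]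
    by (intro sum_mono2) (auto simp: field_simps)
  also have "\<dots> = geom_sum_mean p m - real m"
    by (simp add: geom_sum_mean_def sum_subtractf)
  finally show ?thesis by simp
qed

lemma geom_sum_mean_ge_ln:
  assumes p: "0 < p" "p \<le> 1" and x: "0 < x" "x \<le> real m" "x * p \<le> 1"
  shows "real m + (1 - x * p) * ln x / p \<le> geom_sum_mean p m"
proof -
  define L where "L = nat \<lfloor>x\<rfloor>"
  have L: "real L \<le> x" "x < real L + 1"
    using x(1) by (simp_all add: L_def)
  have Lp: "real L * p \<le> x * p"
    using L p by (simp add: mult_right_mono)
  have "(1 - x * p) * ln x \<le> (1 - x * p) * ln (real L + 1)"
    using L x by (intro mult_left_mono) auto
  also have "\<dots> \<le> (1 - real L * p) * ln (real L + 1)"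
    using Lp by (intro mult_right_mono) auto
  also have "\<dots> \<le> (1 - real L * p) * harm L"
    using ln_le_harm[of L] Lp x by (intro mult_left_mono) auto
  finally have "(1 - x * p) * ln x / p \<le> (1 - real L * p) * harm L / p"
    using p by (simp add: divide_right_mono)
  moreover have "real m + (1 - real L * p) * harm L / p \<le> geom_sum_mean p m"
    using L x Lp by (intro geom_sum_mean_ge_harm[OF p]) auto
  ultimately show ?thesis by simp
qed

lemma geom_sum_mean_ge_length: "0 < p \<Longrightarrow> p \<le> 1 \<Longrightarrow> real m \<le> geom_sum_mean p m"
  using geom_sum_mean_ge_harm[of p 0 m] by (simp add: harm_def)

section \<open>The regime \<open>p = F ln N / N\<close>\<close>

lemma geom_sum_mean_le_window:
  fixes N F :: real
  assumes F: "0 < F" and N: "1 < N" and p: "F * ln N / N \<le> 1"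
    and m: "1 \<le> m" "real m \<le> N / 7"
  shows "geom_sum_mean (F * ln N / N) m \<le> N / 7 + N / F + N / (F * ln N)"
proof -
  let ?p = "F * ln N / N"
  have lnN: "0 < ln N" using N by simp
  have p_pos: "0 < ?p" using F lnN N by simp
  have "ln (real m) \<le> ln N"
    using m N by (subst ln_le_cancel_iff) auto
  hence "(ln (real m) + 1) / ?p \<le> (ln N + 1) / ?p"
    using p_pos by (intro divide_right_mono) auto
  also have "\<dots> = N / F + N / (F * ln N)"
    using F lnN N by (simp add: field_simps)
  finally show ?thesis
    using geom_sum_mean_le[OF p_pos p m(1)] m(2) by linarith
qed

lemma geom_sum_var_le_window:
  fixes N F :: real
  assumes F: "28 \<le> F" and N: "0 < N" and lnN: "1 \<le> ln N" and p: "F * ln N / N \<le> 1"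
    and m: "1 \<le> m" "real m \<le> N / 7"
  shows "geom_sum_var (F * ln N / N) m \<le> N ^ 2 / (28 * ln N)"
proof -
  let ?p = "F * ln N / N"
  have N_gt_1: "1 < N" using lnN ln_gt_zero_iff[OF N] by linarith
  have F_lnN: "28 \<le> F * ln N"
    using mult_mono[of 28 F 1 "ln N"] F lnN by simp
  hence p_pos: "0 < ?p" using N by simp
  from F_lnN have NF: "N / F \<le> N / 28" "N / (F * ln N) \<le> N / 28"
    using F N by (intro divide_left_mono; simp)+
  have F_pos: "0 < F" using F by simp
  have mean: "geom_sum_mean ?p m \<le> N"
    using geom_sum_mean_le_window[OF F_pos N_gt_1 p m] NF N by linarith
  have "geom_sum_var ?p m \<le> geom_sum_mean ?p m * (N / (F * ln N))"
    using geom_sum_var_le_mean[OF p_pos p] by simp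
  also have "\<dots> \<le> N * (N / (28 * ln N))"
    using mean geom_sum_mean_nonneg[OF p_pos p] F lnN N N_gt_1
    by (intro mult_mono divide_left_mono mult_right_mono) auto
  finally show ?thesis by (simp add: power2_eq_square)
qed

lemma geom_sum_mean_ge_window:
  fixes N F :: real
  assumes F: "0 < F" and N: "56 \<le> N" and lnN: "3 \<le> ln N" and p: "F * ln N / N \<le> 1"
    and small: "F / ln N + 2 * ln (ln N) / ln N \<le> 1" and m: "N / 7 - 1 \<le> real m"
  shows "real m + (1 - F / ln N) * (1 - 2 * ln (ln N) / ln N) * (N / F)
           \<le> geom_sum_mean (F * ln N / N) m"
proof -
  define l where "l = ln N"
  define p where "p = F * l / N"
  \<comment> \<open>the terms \<open>i \<le> N / (ln N)\<^sup>2\<close> of the mean contribute almost \<open>ln N / p = N / F\<close>\<close>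
  define x where "x = N / l ^ 2"
  have l: "3 \<le> l" "0 \<le> ln l" using lnN by (simp_all add: l_def)
  have p_pos: "0 < p" using F N l by (simp add: p_def)
  have p_le_1: "p \<le> 1" using p by (simp add: p_def l_def)
  have "3 * 3 \<le> l * l"
    using l by (intro mult_mono) auto
  hence "N / l ^ 2 \<le> N / 9"
    using N by (intro divide_left_mono) (auto simp: power2_eq_square)
  hence x: "0 < x" "x \<le> real m"
    using N l m by (auto simp: x_def)
  have xp: "x * p = F / l"
    using N l by (simp add: x_def p_def power2_eq_square field_simps)
  have ln_x: "ln x = l - 2 * ln l"
    using N l by (simp add: x_def ln_div ln_realpow l_def)
  have "(1 - x * p) * ln x / p = (1 - F / l) * (l - 2 * ln l) / p"
    by (simp only: xp ln_x)
  also have "\<dots> = (1 - F / l) * (1 - 2 * ln l / l) * (N / F)"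
    using F N l by (simp add: p_def field_simps)
  moreover have "0 \<le> 2 * ln l / l"
    using l by simp
  hence "x * p \<le> 1"
    using small by (simp add: xp l_def)
  hence "real m + (1 - x * p) * ln x / p \<le> geom_sum_mean p m"
    by (rule geom_sum_mean_ge_ln[OF p_pos p_le_1 x])
  ultimately show ?thesis
    unfolding l_def[symmetric] p_def[symmetric] by linarith
qed

lemma geom_sum_mean_upper_window:
  fixes N F \<epsilon> :: real
  assumes F: "28 \<le> F" and N: "1 < N" and eps: "1 / ln N \<le> \<epsilon> / 2"
    and p: "F * ln N / N \<le> 1" and m: "1 \<le> m" "real m \<le> N / 7"
  shows "geom_sum_mean (F * ln N / N) m + \<epsilon> * N / 14 \<le> (1 + \<epsilon>) * (N / 7 + N / F)"
proof -
  have lnN: "0 < ln N" using N by simp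
  have "28 * ln N \<le> F * ln N"
    using F lnN by simp
  hence "N / (F * ln N) \<le> N / (28 * ln N)"
    using N lnN by (intro divide_left_mono) auto
  also have "\<dots> = (1 / ln N) * N / 28" by simp
  also have "\<dots> \<le> (\<epsilon> / 2) * N / 28"
    using eps N by (intro divide_right_mono mult_right_mono) auto
  finally have "N / (F * ln N) \<le> \<epsilon> * N / 56" by simp
  moreover have "0 < \<epsilon>"
    using eps divide_pos_pos[OF zero_less_one lnN] by linarith
  hence "0 \<le> \<epsilon> * (N / F)" "0 \<le> \<epsilon> * N"
    using N F by auto
  moreover have "(1 + \<epsilon>) * (N / 7 + N / F) = N / 7 + N / F + \<epsilon> * N / 7 + \<epsilon> * (N / F)"
    by (simp add: distrib_left distrib_right add_divide_distrib)
  ultimately show ?thesis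
    using geom_sum_mean_le_window[OF _ N p m] F by linarith
qed

lemma geom_sum_mean_lower_window:
  fixes N F \<epsilon> :: real
  assumes F: "0 < F" and eps: "0 < \<epsilon>" "28 \<le> \<epsilon> * N" and N: "56 \<le> N" and lnN: "3 \<le> ln N"
    and small: "(28 / \<epsilon> + 2 * ln (ln N)) / ln N \<le> min \<epsilon> 1"
    and p: "F * ln N / N \<le> 1" and m: "N / 7 - 1 \<le> real m"
  shows "(1 - \<epsilon>) * (N / 7 + N / F) \<le> geom_sum_mean (F * ln N / N) m - \<epsilon> * N / 14"
proof -
  have p_pos: "0 < F * ln N / N" using F N lnN by simp
  have expand: "(1 - \<epsilon>) * (N / 7 + N / F) = N / 7 - \<epsilon> * N / 7 + (1 - \<epsilon>) * (N / F)"
    by (simp add: distrib_left left_diff_distrib)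
  show ?thesis
  proof (cases "28 / \<epsilon> \<le> F")
    case True
    \<comment> \<open>then \<open>N / F\<close> is negligible and the trivial bound \<open>m \<le> mean\<close> suffices\<close>
    have "N / F \<le> N / (28 / \<epsilon>)"
      using True eps N F by (intro divide_left_mono) auto
    hence "N / F \<le> \<epsilon> * N / 28"
      by (simp add: mult.commute)
    moreover have "(1 - \<epsilon>) * (N / F) = N / F - \<epsilon> * (N / F)" "0 \<le> \<epsilon> * (N / F)"
      using eps F N by (simp_all add: left_diff_distrib diff_divide_distrib)
    ultimately show ?thesis
      using geom_sum_mean_ge_length[OF p_pos p, of m] expand eps m by linarith
  next
    case False
    define a where "a = 28 / \<epsilon> / ln N"
    define b where "b = 2 * ln (ln N) / ln N"
    have ab: "a + b \<le> \<epsilon>" "a + b \<le> 1" "0 \<le> a" "0 \<le> b"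
      using small eps lnN by (auto simp: a_def b_def add_divide_distrib)
    have Fa: "F / ln N \<le> a"
      using False lnN unfolding a_def by (intro divide_right_mono) auto
    have "(1 - a) * (1 - b) = 1 - (a + b) + a * b"
      by (simp add: algebra_simps)
    hence "1 - \<epsilon> \<le> (1 - a) * (1 - b)"
      using ab mult_nonneg_nonneg[OF ab(3,4)] by linarith
    also have "\<dots> \<le> (1 - F / ln N) * (1 - b)"
      using Fa ab by (intro mult_right_mono) auto
    finally have "(1 - \<epsilon>) * (N / F) \<le> (1 - F / ln N) * (1 - b) * (N / F)"
      using F N by (intro mult_right_mono) auto
    moreover have "real m + (1 - F / ln N) * (1 - b) * (N / F) \<le> geom_sum_mean (F * ln N / N) m"
      using geom_sum_mean_ge_window[OF F N lnN p _ m] Fa ab by (simp add: b_def)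
    ultimately show ?thesis
      using expand eps m by linarith
  qed
qed

lemma geom_sum_pmf_window_prob_ge:
  fixes n :: nat and F \<epsilon> :: real
  assumes F: "28 \<le> F" and eps: "0 < \<epsilon>" "28 / \<epsilon> \<le> real n" "1 / ln (real n) \<le> \<epsilon> / 2"
    and n: "56 \<le> real n" "3 \<le> ln (real n)"
    and small: "(28 / \<epsilon> + 2 * ln (ln (real n))) / ln (real n) \<le> min \<epsilon> 1"
    and p: "F * ln (real n) / real n \<le> 1"
  shows "1 - 7 / (\<epsilon> ^ 2 * ln (real n))
           \<le> measure_pmf.prob (geom_sum_pmf (F * ln (real n) / real n) (n div 7))
               {y. (1 - \<epsilon>) * (real n / 7 + real n / F) < real y \<and>
                   real y < (1 + \<epsilon>) * (real n / 7 + real n / F)}"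
proof -
  define N where "N = real n"
  define m where "m = n div 7"
  define t where "t = \<epsilon> * N / 14"
  have m: "N / 7 - 1 \<le> real m" "real m \<le> N / 7" "1 \<le> m"
    using n(1) unfolding m_def N_def by linarith+
  have p_pos: "0 < F * ln N / N" using F n by (simp add: N_def)
  have t: "0 < t" using eps n by (simp add: t_def N_def)
  have "geom_sum_var (F * ln N / N) m / t ^ 2 \<le> N ^ 2 / (28 * ln N) / t ^ 2"
    using geom_sum_var_le_window[OF F _ _ _ m(3,2)] n p t by (intro divide_right_mono) (auto simp: N_def)
  also have "\<dots> = 7 / (\<epsilon> ^ 2 * ln N)"
    using n eps by (simp add: t_def N_def field_simps power2_eq_square)
  finally have "1 - 7 / (\<epsilon> ^ 2 * ln N) \<le> 1 - geom_sum_var (F * ln N / N) m / t ^ 2"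
    by simp
  also have "\<dots> \<le> measure_pmf.prob (geom_sum_pmf (F * ln N / N) m)
               {y. (1 - \<epsilon>) * (N / 7 + N / F) < real y \<and> real y < (1 + \<epsilon>) * (N / 7 + N / F)}"
  proof (rule geom_sum_pmf_prob_interval_ge[OF p_pos _ t])
    show "F * ln N / N \<le> 1" using p by (simp add: N_def)
    show "(1 - \<epsilon>) * (N / 7 + N / F) \<le> geom_sum_mean (F * ln N / N) m - t"
      using geom_sum_mean_lower_window[of F \<epsilon> N] F eps n small p m(1)
      by (simp add: t_def N_def field_simps)
    show "geom_sum_mean (F * ln N / N) m + t \<le> (1 + \<epsilon>) * (N / 7 + N / F)"
      using geom_sum_mean_upper_window[OF F _ _ _ m(3,2)] eps n p
      by (simp add: t_def N_def)
  qed
  finally show ?thesis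
    by (simp add: N_def m_def)
qed

theorem lemma3:
  fixes f :: "nat \<Rightarrow> real"
  assumes mono_f: "mono f"
    and f_gt: "\<And>n. f n > 28"
    and p_le_1: "eventually (\<lambda>n. f n * ln (real n) / real n \<le> 1) sequentially"
    and eps: "\<epsilon> > 0"
  shows "(\<lambda>n. measure_pmf.prob (geom_sum_pmf (f n * ln (real n) / real n) (n div 7))
            {y. (1 - \<epsilon>) * (real n / 7 + real n / f n) < real y \<and>
                real y < (1 + \<epsilon>) * (real n / 7 + real n / f n)})
         \<longlonglongrightarrow> 1"
proof -
  let ?P = "\<lambda>n. measure_pmf.prob (geom_sum_pmf (f n * ln (real n) / real n) (n div 7))
            {y. (1 - \<epsilon>) * (real n / 7 + real n / f n) < real y \<and>
                real y < (1 + \<epsilon>) * (real n / 7 + real n / f n)}"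
  have "eventually (\<lambda>n. 28 / \<epsilon> \<le> real n) sequentially"
    by real_asymp
  moreover have "eventually (\<lambda>n. 1 / ln (real n) \<le> \<epsilon> / 2) sequentially"
    using eps by real_asymp
  moreover have "eventually (\<lambda>n. (28 / \<epsilon> + 2 * ln (ln (real n))) / ln (real n) \<le> min \<epsilon> 1) sequentially"
    using eps by real_asymp
  moreover have "eventually (\<lambda>n. 56 \<le> real n) sequentially"
    by real_asymp
  moreover have "eventually (\<lambda>n. 3 \<le> ln (real n)) sequentially"
    by real_asymp
  ultimately have lower: "eventually (\<lambda>n. 1 - 7 / (\<epsilon> ^ 2 * ln (real n)) \<le> ?P n) sequentially"
    using p_le_1 by eventually_elim (rule geom_sum_pmf_window_prob_ge; use less_imp_le[OF f_gt] eps in auto)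
  have upper: "eventually (\<lambda>n. ?P n \<le> 1) sequentially"
    by (intro always_eventually allI measure_pmf.prob_le_1)
  have "(\<lambda>n. 1 - 7 / (\<epsilon> ^ 2 * ln (real n))) \<longlonglongrightarrow> 1"
    using eps by real_asymp
  then show ?thesis
    by (rule tendsto_sandwich[OF lower upper _ tendsto_const])
qed

end
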